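(* Let $(q_n)$ be the Fibonacci Quilt sequence. For all integers $k\ge0$ and $\ell\ge1+5k$ (and $\ell\ge6$ when $k\ge1$), \[ q_\ell+q_{\ell-5}+q_{\ell-10}+\cdots+q_{\ell-5k}<q_{\ell+1}. \]
   Context: Given an increasing sequence of positive integers $(q_i)_{i\ge1}$, an FQ-legal decomposition of an integer $m\ge0$ is an expression $m=q_{\ell_1}+q_{\ell_2}+\cdots+q_{\ell_t}$ ($t\ge0$, the empty sum representing $0$) with distinct indices $\ell_1>\ell_2>\cdots>\ell_t$ such that $|\ell_i-\ell_j|\notin\{1,3,4\}$ for all $i,j$, and $\{1,3\}\not\subset\{\ell_1,\dots,\ell_t\}$. The Fibonacci Quilt sequence is the increasing sequence of positive integers $(q_i)_{i\ge1}$ in which each $q_i$ is the smallest positive integer having no FQ-legal decomposition using only $q_1,\dots,q_{i-1}$. Its first terms are $1,2,3,4,5,7,9,12,16,21,28,37,49,\dots$. *)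

theory Defs
  imports Main
begin

definition fq_legal :: "nat set \<Rightarrow> bool" where
  "fq_legal S \<longleftrightarrow> finite S \<and> 0 \<notin> S \<and>
     (\<forall>i\<in>S. \<forall>j\<in>S. \<bar>int i - int j\<bar> \<notin> {1, 3, 4}) \<and> \<not> ({1, 3} \<subseteq> S)"

fun fq_list :: "nat \<Rightarrow> nat list" where
  "fq_list 0 = []"
| "fq_list (Suc n) = fq_list n @
     [LEAST m. m > 0 \<and> \<not> (\<exists>S. S \<subseteq> {1..n} \<and> fq_legal S \<and>
                          (\<Sum>j\<in>S. fq_list n ! (j - 1)) = m)]"

text \<open>The Fibonacci Quilt sequence, indexed from 1 (fq 0 is a meaningless junk value).\<close>
definition fq :: "nat \<Rightarrow> nat" where
  "fq i = last (fq_list i)"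

end

theory Submission
  imports Defs
begin

text \<open>Let \<open>q\<^sub>n = n\<close> for \<open>n \<le> 4\<close> and \<open>q\<^sub>n = q\<^sub>n\<^sub>-\<^sub>2 + q\<^sub>n\<^sub>-\<^sub>3\<close> afterwards.
  A legal index set with largest element \<open>m\<close> sums to less than \<open>q\<^sub>m\<^sub>+\<^sub>3\<close>; from this,
  strong induction shows that \<open>q\<^sub>n\<^sub>+\<^sub>1\<close> is not a legal sum of \<open>q\<^sub>1, \<dots>, q\<^sub>n\<close>, while the
  greedy algorithm writes every smaller number as one. So \<open>q\<close> is the Fibonacci Quilt sequence.
  It satisfies \<open>q\<^sub>n\<^sub>+\<^sub>1 = q\<^sub>n + q\<^sub>n\<^sub>-\<^sub>4\<close> for \<open>n \<ge> 6\<close>, so by induction on \<open>k\<close> the sum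
  \<open>q\<^sub>l + (q\<^sub>l\<^sub>-\<^sub>5 + \<dots> + q\<^sub>l\<^sub>-\<^sub>5\<^sub>k)\<close> is below \<open>q\<^sub>l + q\<^sub>l\<^sub>-\<^sub>4 = q\<^sub>l\<^sub>+\<^sub>1\<close>.\<close>

fun quilt :: "nat \<Rightarrow> nat" where
  "quilt n = (if n \<le> 4 then n else quilt (n - 2) + quilt (n - 3))"

declare quilt.simps [simp del]

lemma quilt_small: "n \<le> 4 \<Longrightarrow> quilt n = n"
  by (simp add: quilt.simps)

lemma quilt_rec: "5 \<le> n \<Longrightarrow> quilt n = quilt (n - 2) + quilt (n - 3)"
  by (simp add: quilt.simps)

lemma quilt_5: "quilt 5 = 5" and quilt_6: "quilt 6 = 7"
  by (simp_all add: quilt.simps)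

lemma quilt_Suc_gt: "quilt n < quilt (Suc n)"
proof (induction n rule: less_induct)
  case (less n)
  show ?case
  proof (cases "n \<le> 4")
    case True
    then show ?thesis by (cases "n = 4") (simp_all add: quilt_small quilt_5)
  next
    case False
    have "quilt (n - 3) < quilt (n - 2)" "quilt (n - 2) < quilt (n - 1)"
      using less[of "n - 3"] less[of "n - 2"] False by (simp_all add: Suc_diff_Suc numeral_eq_Suc)
    then show ?thesis using quilt_rec[of n] quilt_rec[of "Suc n"] False by simp
  qed
qed

lemma strict_mono_quilt: "strict_mono quilt"
  by (simp add: quilt_Suc_gt strict_mono_Suc_iff)

lemma quilt_less_iff [simp]: "quilt m < quilt n \<longleftrightarrow> m < n"
  using strict_mono_quilt by (simp add: strict_mono_less)

lemma quilt_le_iff [simp]: "quilt m \<le> quilt n \<longleftrightarrow> m \<le> n"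
  using strict_mono_quilt by (simp add: strict_mono_less_eq)

lemma quilt_eq_iff [simp]: "quilt m = quilt n \<longleftrightarrow> m = n"
  using strict_mono_quilt by (simp add: strict_mono_eq)

lemma quilt_pos: "0 < n \<Longrightarrow> 0 < quilt n"
  using quilt_less_iff[of 0 n] by (simp add: quilt_small)

lemma quilt_Suc_eq: "6 \<le> n \<Longrightarrow> quilt (n + 1) = quilt n + quilt (n - 4)"
  using quilt_rec[of "n + 1"] quilt_rec[of n] quilt_rec[of "n - 1"]
  by (simp add: numeral_eq_Suc)

lemma quilt_add3_eq: "4 \<le> n \<Longrightarrow> quilt (n + 3) = quilt n + quilt (n - 1) + quilt (n - 2)"
  using quilt_rec[of "n + 3"] quilt_rec[of "n + 1"] by (simp add: numeral_eq_Suc)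

lemma quilt_add3_ge: "quilt (n + 1) + quilt n \<le> quilt (n + 3)"
proof (cases "2 \<le> n")
  case True
  then show ?thesis using quilt_rec[of "n + 3"] by (simp add: numeral_eq_Suc)
next
  case False
  then show ?thesis by (cases n) (auto simp: quilt_small)
qed

lemma quilt_Suc_less: "4 \<le> n \<Longrightarrow> quilt (n + 1) < quilt n + quilt (n - 2)"
proof (cases "6 \<le> n")
  case True
  then show ?thesis using quilt_Suc_eq[of n] quilt_less_iff[of "n - 4" "n - 2"] by simp
next
  case False
  moreover assume "4 \<le> n"
  ultimately have "n = 4 \<or> n = 5" by auto
  then show ?thesis by (auto simp: quilt_small quilt_5 quilt_6)
qed

lemma subset_atLeastAtMost_pred:
  assumes "S \<subseteq> {a..n}" "n \<notin> S"
  shows "S \<subseteq> {a..n - 1::nat}"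
proof
  fix x assume "x \<in> S"
  then have "a \<le> x" "x < n" using assms by (auto simp: order.order_iff_strict)
  then show "x \<in> {a..n - 1}" by simp
qed

lemma fq_legal_subset: "fq_legal S \<Longrightarrow> T \<subseteq> S \<Longrightarrow> fq_legal T"
  unfolding fq_legal_def by (meson finite_subset subset_eq)

lemma fq_legal_pos: "fq_legal S \<Longrightarrow> x \<in> S \<Longrightarrow> 0 < x"
  unfolding fq_legal_def by (metis gr0I)

lemma fq_legal_gap:
  assumes "fq_legal S" "x \<in> S" "y \<in> S" "x < y"
  shows "y = x + 2 \<or> x + 5 \<le> y"
proof -
  have "\<bar>int x - int y\<bar> \<notin> {1, 3, 4}"
    using assms(1-3) unfolding fq_legal_def by blast
  moreover have "\<bar>int x - int y\<bar> = int (y - x)" using assms(4) by simp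
  ultimately have "y - x \<noteq> 1" "y - x \<noteq> 3" "y - x \<noteq> 4" by auto
  with assms(4) show ?thesis by presburger
qed

lemma fq_legal_two_apart: "fq_legal S \<Longrightarrow> x \<in> S \<Longrightarrow> x + 2 \<in> S \<Longrightarrow> 2 \<le> x"
proof (rule ccontr)
  assume "fq_legal S" "x \<in> S" "x + 2 \<in> S" "\<not> 2 \<le> x"
  moreover from this have "x = 1" using fq_legal_pos by fastforce
  ultimately show False by (simp add: fq_legal_def numeral_3_eq_3)
qed

lemma fq_legal_remove_top:
  assumes "fq_legal S" "S \<subseteq> {1..m}" "m \<in> S"
  shows "S - {m} \<subseteq> {1..m - 2}"
proof
  fix x assume x: "x \<in> S - {m}"
  then have "1 \<le> x" "x < m" using assms(2) by (auto simp: order.order_iff_strict)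
  then show "x \<in> {1..m - 2}"
    using fq_legal_gap[OF assms(1) _ assms(3), of x] x by auto
qed

lemma fq_legal_top_cases:
  assumes S: "fq_legal S" "S \<subseteq> {1..m}" "m \<in> S"
  obtains T where "fq_legal T" "T \<subseteq> {1..m - 5}" "sum f S = f m + sum f T"
  | T where "4 \<le> m" "fq_legal T" "T \<subseteq> {1..m - 7}" "sum f S = f m + f (m - 2) + sum f T"
proof -
  have fin: "finite S" using S(1) by (simp add: fq_legal_def)
  have below_top: "x = m - 2 \<or> x + 5 \<le> m" if "x \<in> S" "x \<noteq> m" for x
  proof -
    have "x < m" using that S(2) by auto
    then show ?thesis using fq_legal_gap[OF S(1) that(1) S(3)] by linarith
  qed
  show thesis
  proof (cases "m - 2 \<in> S")
    case False
    have "x \<in> {1..m - 5}" if "x \<in> S - {m}" for x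
      using below_top[of x] that False S(2) by auto
    then have "S - {m} \<subseteq> {1..m - 5}" by blast
    moreover have "sum f S = f m + sum f (S - {m})"
      using fin S(3) by (simp add: sum.remove)
    ultimately show thesis using that(1) fq_legal_subset[OF S(1)] by blast
  next
    case True
    have "m - 2 + 2 = m" using True S(2) by fastforce
    then have "2 \<le> m - 2" using fq_legal_two_apart[OF S(1) True] S(3) by simp
    then have m: "4 \<le> m" by linarith
    have "x \<in> {1..m - 7}" if x: "x \<in> S - {m, m - 2}" for x
    proof -
      have "x + 5 \<le> m" using below_top[of x] x by auto
      then have "m - 2 = x + 2 \<or> x + 5 \<le> m - 2"
        using fq_legal_gap[OF S(1) _ True, of x] x by auto
      then show ?thesis using \<open>x + 5 \<le> m\<close> x S(2) by auto
    qed
    then have "S - {m, m - 2} \<subseteq> {1..m - 7}" by blast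
    moreover have "sum f S = f m + f (m - 2) + sum f (S - {m, m - 2})"
      using sum.remove[OF fin S(3), of f] sum.remove[of "S - {m}" "m - 2" f] fin True m
      by (simp add: Diff_insert2[of S m "{m - 2}"] add.assoc)
    ultimately show thesis using that(2) m fq_legal_subset[OF S(1)] by blast
  qed
qed

lemma fq_legal_sum_less: "fq_legal S \<Longrightarrow> S \<subseteq> {1..m} \<Longrightarrow> sum quilt S < quilt (m + 3)"
proof (induction m arbitrary: S rule: less_induct)
  case (less m S)
  show ?case
  proof (cases "m \<in> S")
    case False
    show ?thesis
    proof (cases "m = 0")
      case True
      then show ?thesis using less.prems(2) quilt_pos[of 3] by auto
    next
      case False
      have "S \<subseteq> {1..m - 1}" using subset_atLeastAtMost_pred[OF less.prems(2) \<open>m \<notin> S\<close>] .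
      then have "sum quilt S < quilt (m - 1 + 3)" using less.IH[of "m - 1"] less.prems(1) False by simp
      also have "\<dots> \<le> quilt (m + 3)" by simp
      finally show ?thesis .
    qed
  next
    case True
    then have "0 < m" using fq_legal_pos less.prems(1) by blast
    from less.prems True show ?thesis
    proof (cases rule: fq_legal_top_cases[where f = quilt])
      case (1 T)
      have "sum quilt T < quilt (m - 5 + 3)" using less.IH[of "m - 5"] 1 \<open>0 < m\<close> by simp
      moreover have "quilt m + quilt (m - 5 + 3) \<le> quilt (m + 3)"
      proof (cases "m = 1")
        case True
        then show ?thesis by (simp add: quilt_small)
      next
        case False
        then have "quilt (m - 5 + 3) \<le> quilt (m + 1)" using \<open>0 < m\<close> by simp
        then show ?thesis using quilt_add3_ge[of m] by linarith
      qed
      ultimately show ?thesis using 1 by linarith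
    next
      case (2 T)
      have "sum quilt T < quilt (m - 7 + 3)" using less.IH[of "m - 7"] 2 by simp
      also have "\<dots> \<le> quilt (m - 1)" using \<open>4 \<le> m\<close> by simp
      finally show ?thesis using 2 quilt_add3_eq[of m] by linarith
    qed
  qed
qed

lemma fq_legal_sum_ne_top:
  assumes S: "fq_legal S" "S \<subseteq> {1..n}" "n \<in> S"
    and IH: "\<And>T. fq_legal T \<Longrightarrow> T \<subseteq> {1..n - 5} \<Longrightarrow> sum quilt T \<noteq> quilt (n - 5 + 1)"
  shows "sum quilt S \<noteq> quilt (n + 1)"
  using S
proof (cases rule: fq_legal_top_cases[where f = quilt])
  case (1 T)
  show ?thesis
  proof (cases "6 \<le> n")
    case True
    have "n - 5 + 1 = n - 4" using True by simp
    then show ?thesis using IH[OF 1(1,2)] 1(3) quilt_Suc_eq[OF True] by (metis add_left_cancel)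
  next
    case False
    then have "T = {}" using 1(2) by auto
    then show ?thesis using 1(3) by simp
  qed
next
  case (2 T)
  then show ?thesis using quilt_Suc_less[of n] by linarith
qed

lemma fq_legal_sum_ne_below_top:
  assumes S: "fq_legal S" "S \<subseteq> {1..n - 1}" "n - 1 \<in> S"
    and IH: "\<And>T. fq_legal T \<Longrightarrow> T \<subseteq> {1..n - 3} \<Longrightarrow> sum quilt T \<noteq> quilt (n - 3 + 1)"
  shows "sum quilt S \<noteq> quilt (n + 1)"
proof -
  define T where "T = S - {n - 1}"
  have T: "fq_legal T" "T \<subseteq> {1..n - 3}"
    using fq_legal_subset[OF S(1)] fq_legal_remove_top[OF S] unfolding T_def by auto
  have sum_S: "sum quilt S = quilt (n - 1) + sum quilt T"
    unfolding T_def using S(1,3) by (simp add: fq_legal_def sum.remove)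
  show ?thesis
  proof (cases "4 \<le> n")
    case True
    have "quilt (n + 1) = quilt (n - 1) + quilt (n - 3 + 1)"
      using quilt_rec[of "n + 1"] True by (simp add: Suc_diff_Suc numeral_eq_Suc)
    then show ?thesis using IH[OF T] sum_S by linarith
  next
    case False
    then have "T = {}" using T(2) by auto
    then show ?thesis using sum_S by simp
  qed
qed

lemma fq_legal_sum_ne: "fq_legal S \<Longrightarrow> S \<subseteq> {1..n} \<Longrightarrow> sum quilt S \<noteq> quilt (n + 1)"
proof (induction n arbitrary: S rule: less_induct)
  case (less n S)
  have "S \<subseteq> {1..n - 2}" if "n \<notin> S" "n - 1 \<notin> S"
    using subset_atLeastAtMost_pred[OF subset_atLeastAtMost_pred[OF less.prems(2) that(1)] that(2)]
    by (simp add: numeral_2_eq_2)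
  then consider (top) "n \<in> S" | (below_top) "n \<notin> S" "n - 1 \<in> S" | (low) "S \<subseteq> {1..n - 2}"
    by blast
  then show ?case
  proof cases
    case top
    then have "0 < n" using fq_legal_pos less.prems(1) by blast
    then show ?thesis
      using fq_legal_sum_ne_top[OF less.prems top] less.IH[of "n - 5"] by simp
  next
    case below_top
    then have "0 < n" using less.prems(2) by (cases n) auto
    then show ?thesis
      using fq_legal_sum_ne_below_top[OF less.prems(1) _ below_top(2)] less.IH[of "n - 3"]
        subset_atLeastAtMost_pred[OF less.prems(2) below_top(1)] by simp
  next
    case low
    show ?thesis
    proof (cases "S = {}")
      case True
      then show ?thesis using quilt_pos[of "n + 1"] by simp
    next
      case False
      then have "3 \<le> n" using low by fastforce
      then show ?thesis using fq_legal_sum_less[OF less.prems(1) low] by simp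
    qed
  qed
qed

lemma fq_legal_insert_top:
  assumes "fq_legal T" "T \<subseteq> {1..n - 5}" "5 \<le> n"
  shows "fq_legal (insert n T)" "insert n T \<subseteq> {1..n}" "sum f (insert n T) = f n + sum f T"
proof -
  have far: "5 \<le> \<bar>int n - int y\<bar> \<and> 5 \<le> \<bar>int y - int n\<bar>" if "y \<in> T" for y
    using that assms(2,3) by force
  have "\<bar>int i - int j\<bar> \<notin> {1, 3, 4}" if "i \<in> insert n T" "j \<in> insert n T" for i j
    using that far assms(1) unfolding fq_legal_def by fastforce
  then show "fq_legal (insert n T)"
    using assms(1,3) unfolding fq_legal_def by auto
  show "insert n T \<subseteq> {1..n}"
    using subset_trans[OF assms(2), of "{1..n}"] assms(3) by auto
  have "n \<notin> T" using assms(2,3) by auto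
  then show "sum f (insert n T) = f n + sum f T"
    using assms(1) by (simp add: fq_legal_def)
qed

lemma fq_legal_sum_exists: "x < quilt (n + 1) \<Longrightarrow> \<exists>S. S \<subseteq> {1..n} \<and> fq_legal S \<and> sum quilt S = x"
proof (induction n arbitrary: x rule: less_induct)
  case (less n x)
  consider "x < quilt n" | "x = quilt n" | "quilt n < x" by linarith
  then show ?case
  proof cases
    case 1
    then have "0 < n" using quilt_small[of 0] by (cases n) auto
    then obtain S where "S \<subseteq> {1..n - 1}" "fq_legal S" "sum quilt S = x"
      using less.IH[of "n - 1" x] 1 by auto
    moreover have "{1..n - 1} \<subseteq> {1..n}" by auto
    ultimately show ?thesis by blast
  next
    case 2
    show ?thesis
    proof (cases "n = 0")
      case True
      then show ?thesis using 2 by (intro exI[of _ "{}"]) (simp add: fq_legal_def quilt_small)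
    next
      case False
      then show ?thesis using 2 by (intro exI[of _ "{n}"]) (simp add: fq_legal_def)
    qed
  next
    case 3
    have "5 \<le> n"
    proof (rule ccontr)
      assume "\<not> 5 \<le> n"
      then have "quilt (n + 1) = quilt n + 1" by (cases "n = 4") (simp_all add: quilt_small quilt_5)
      then show False using 3 less.prems by linarith
    qed
    then consider "n = 5" | "6 \<le> n" by linarith
    then show ?thesis
    proof cases
      case 1
      \<comment> \<open>The only place where greedy fails: \<open>{1, 5}\<close> is not legal, but \<open>6 = q\<^sub>2 + q\<^sub>4\<close>.\<close>
      then have "x = 6" using 3 less.prems by (simp add: quilt_5 quilt_6)
      then show ?thesis using 1
        by (intro exI[of _ "{2, 4}"]) (simp add: fq_legal_def quilt_small)
    next
      case 2
      have "n - 5 + 1 = n - 4" using 2 by simp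
      then have "x - quilt n < quilt (n - 5 + 1)"
        using 3 less.prems quilt_Suc_eq[OF 2] by (simp only:)
      then obtain T where T: "T \<subseteq> {1..n - 5}" "fq_legal T" "sum quilt T = x - quilt n"
        using less.IH[of "n - 5"] 2 by auto
      then show ?thesis
        using fq_legal_insert_top(1,2)[OF T(2,1)] fq_legal_insert_top(3)[OF T(2,1), of quilt] 2 3
        by (intro exI[of _ "insert n T"]) auto
    qed
  qed
qed

lemma quilt_Suc_Least:
  "(LEAST m. 0 < m \<and> \<not> (\<exists>S. S \<subseteq> {1..n} \<and> fq_legal S \<and> sum quilt S = m)) = quilt (n + 1)"
proof (rule Least_equality)
  show "0 < quilt (n + 1) \<and> \<not> (\<exists>S. S \<subseteq> {1..n} \<and> fq_legal S \<and> sum quilt S = quilt (n + 1))"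
    using quilt_pos[of "n + 1"] fq_legal_sum_ne[of _ n] by auto
next
  fix m assume "0 < m \<and> \<not> (\<exists>S. S \<subseteq> {1..n} \<and> fq_legal S \<and> sum quilt S = m)"
  then show "quilt (n + 1) \<le> m" using fq_legal_sum_exists[of m n] by (meson not_le)
qed

lemma fq_list_eq_map_quilt: "fq_list n = map quilt [1..<n + 1]"
proof (induction n)
  case 0
  show ?case by simp
next
  case (Suc n)
  have "fq_list n ! (j - 1) = quilt j" if "j \<in> {1..n}" for j
    using that Suc.IH by (auto simp del: upt_Suc simp: nth_map_upt)
  then have "(\<Sum>j\<in>S. fq_list n ! (j - 1)) = sum quilt S" if "S \<subseteq> {1..n}" for S
    using that by (intro sum.cong) auto
  then have "(\<exists>S. S \<subseteq> {1..n} \<and> fq_legal S \<and> (\<Sum>j\<in>S. fq_list n ! (j - 1)) = m) \<longleftrightarrow>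
      (\<exists>S. S \<subseteq> {1..n} \<and> fq_legal S \<and> sum quilt S = m)" for m
    by metis
  then show ?case using Suc.IH quilt_Suc_Least[of n] by simp
qed

lemma fq_eq_quilt: "0 < i \<Longrightarrow> fq i = quilt i"
  unfolding fq_def fq_list_eq_map_quilt by (simp add: last_map)

lemma quilt_sum_every_fifth_less:
  "1 + 5 * k \<le> l \<Longrightarrow> (\<Sum>j\<le>k. quilt (l - 5 * j)) < quilt (l + 1)"
proof (induction k arbitrary: l)
  case 0
  then show ?case by simp
next
  case (Suc k)
  then have "6 \<le> l" by simp
  have "(\<Sum>j\<le>Suc k. quilt (l - 5 * j)) = quilt l + (\<Sum>j\<le>k. quilt (l - 5 - 5 * j))"
    unfolding sum.atMost_Suc_shift by (simp add: diff_diff_add)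
  also have "\<dots> < quilt l + quilt (l - 5 + 1)"
    using Suc.IH[of "l - 5"] Suc.prems by (simp add: diff_diff_add)
  also have "\<dots> = quilt (l + 1)"
    using quilt_Suc_eq[OF \<open>6 \<le> l\<close>] \<open>6 \<le> l\<close> by (simp add: Suc_diff_Suc)
  finally show ?case .
qed

theorem mainTheorem15:
  fixes k l :: nat
  assumes "l \<ge> 1 + 5 * k"
    and "k \<ge> 1 \<Longrightarrow> l \<ge> 6"
  shows "(\<Sum>j\<le>k. fq (l - 5 * j)) < fq (l + 1)"
proof -
  have "(\<Sum>j\<le>k. fq (l - 5 * j)) = (\<Sum>j\<le>k. quilt (l - 5 * j))"
    using assms(1) by (intro sum.cong) (auto simp: fq_eq_quilt)
  then show ?thesis
    using quilt_sum_every_fifth_less[OF assms(1)] by (simp add: fq_eq_quilt)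
qed

end
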